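(* Let $G$ be a simple graph and $a,b$ two distinct vertices of $G$. Then the adjacency matrix of $G$ is nondegenerate over $\mathbb{F}_2$ if and only if the adjacency matrix of $\widetilde G_{ab}$ is nondegenerate over $\mathbb{F}_2$; i.e. the nondegeneracy $\nu$ satisfies $\nu(\widetilde G_{ab})=\nu(G)$.
   Context: The adjacency matrix $A(G)$ of a simple graph $G$ with vertices numbered $1,\dots,n$ is the $n\times n$ matrix over $\mathbb{F}_2$ with entry $1$ in position $(i,j)$ iff vertices $i,j$ are adjacent, and $0$ otherwise (zero diagonal). $G$ is nondegenerate if $\det A(G)=1$ over $\mathbb{F}_2$; the nondegeneracy $\nu(G)$ is $1$ if $G$ is nondegenerate and $0$ otherwise. The graph $\widetilde G_{ab}$ (second Vassiliev move) is obtained from $G$ by switching the adjacency between $a$ and each vertex $v\neq a$ of $G$ adjacent to $b$. *)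

theory Defs
  imports "HOL-Analysis.Analysis" "HOL-Library.Z2"
begin

definition simple_graph :: "('v \<Rightarrow> 'v \<Rightarrow> bool) \<Rightarrow> bool" where
  "simple_graph E \<longleftrightarrow> (\<forall>x y. E x y \<longrightarrow> E y x) \<and> (\<forall>x. \<not> E x x)"

definition adj_matrix :: "('v::finite \<Rightarrow> 'v \<Rightarrow> bool) \<Rightarrow> bit ^ 'v ^ 'v" where
  "adj_matrix E = (\<chi> i j. if E i j then 1 else 0)"

definition nondegenerate :: "('v::finite \<Rightarrow> 'v \<Rightarrow> bool) \<Rightarrow> bool" where
  "nondegenerate E \<longleftrightarrow> det (adj_matrix E) = 1"

definition nondegeneracy :: "('v::finite \<Rightarrow> 'v \<Rightarrow> bool) \<Rightarrow> nat" where
  "nondegeneracy E = (if nondegenerate E then 1 else 0)"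

definition vassiliev2 :: "('v \<Rightarrow> 'v \<Rightarrow> bool) \<Rightarrow> 'v \<Rightarrow> 'v \<Rightarrow> ('v \<Rightarrow> 'v \<Rightarrow> bool)" where
  "vassiliev2 E a b = (\<lambda>x y.
     if (x = a \<and> y \<noteq> a \<and> E b y) \<or> (y = a \<and> x \<noteq> a \<and> E b x) then \<not> E x y else E x y)"

end

theory Submission
  imports Defs
begin

(* The second Vassiliev move is a congruence of the adjacency matrix: adding row b to row a
   and then column b to column a sends A to P A P^T with P = I + e_a e_b^T, and det P = 1.
   Over F_2 this switches exactly the adjacencies of a to the neighbours of b, while the new
   diagonal entry A_aa + A_ab + A_ba + A_bb = 2 A_ab vanishes. *)

definition add_row :: "'a::semiring_1^'n^'n \<Rightarrow> 'n \<Rightarrow> 'n \<Rightarrow> 'a^'n^'n" where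
  "add_row M i j = (\<chi> k. if k = i then row i M + row j M else row k M)"

definition add_row_col :: "'a::semiring_1^'n^'n \<Rightarrow> 'n \<Rightarrow> 'n \<Rightarrow> 'a^'n^'n" where
  "add_row_col M i j = transpose (add_row (transpose (add_row M i j)) i j)"

lemma det_add_row:
  fixes M :: "'a::comm_ring_1^'n::finite^'n"
  assumes "i \<noteq> j"
  shows "det (add_row M i j) = det M"
  using det_row_operation[OF assms, where A = M and c = 1]
  unfolding add_row_def by (simp only: vector_smult_lid)

lemma det_add_row_col:
  fixes M :: "'a::comm_ring_1^'n::finite^'n"
  assumes "i \<noteq> j"
  shows "det (add_row_col M i j) = det M"
  by (simp add: add_row_col_def det_transpose det_add_row[OF assms])

lemma add_row_col_nth:
  "add_row_col M i j $ k $ l = M $ k $ l + (if k = i then M $ j $ l else 0)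
     + ((if l = i then M $ k $ j else 0) + (if k = i \<and> l = i then M $ j $ j else 0))"
  by (simp add: add_row_col_def add_row_def transpose_def row_def algebra_simps)

lemma adj_matrix_vassiliev2:
  assumes "simple_graph E" and "a \<noteq> b"
  shows "adj_matrix (vassiliev2 E a b) = add_row_col (adj_matrix E) a b"
proof -
  have sym: "E x y = E y x" and irr: "\<not> E x x" for x y
    using assms(1) unfolding simple_graph_def by blast+
  show ?thesis
    unfolding vec_eq_iff add_row_col_nth
    using assms(2) irr sym
    by (auto simp: adj_matrix_def vassiliev2_def)
qed

theorem mainTheorem2:
  fixes E :: "'v::finite \<Rightarrow> 'v \<Rightarrow> bool" and a b :: 'v
  assumes "simple_graph E" and "a \<noteq> b"
  shows "(nondegenerate (vassiliev2 E a b) \<longleftrightarrow> nondegenerate E)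
         \<and> nondegeneracy (vassiliev2 E a b) = nondegeneracy E"
proof -
  have "det (adj_matrix (vassiliev2 E a b)) = det (adj_matrix E)"
    by (simp add: adj_matrix_vassiliev2[OF assms] det_add_row_col[OF assms(2)])
  then show ?thesis
    unfolding nondegeneracy_def nondegenerate_def by simp
qed

end
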